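(* Let $d\ge 1$ and $c\ge 1$, let $\mathcal C$ be a finite collection of $c$-fat objects in $\mathbb R^d$, let $G$ be the intersection graph of $\mathcal C$, and let $t\ge 0$ be an integer. Then $\hat\beta_t(G)\le C_d\cdot c\cdot (t+1)^{2d}$, where $C_d$ is a constant depending only on $d$ (i.e. $\hat\beta_t(G)=O(c\,t^{2d})$).
   Context: An object is a bounded subset of $\mathbb R^d$. The size of an object is the side length of its smallest enclosing axis-parallel hypercube; a box of size $r$ is an axis-parallel hypercube of side length $r$. A collection $\mathcal C$ of objects in $\mathbb R^d$ is $c$-fat (for $c\ge 1$) if for every $r\ge 0$ and every box $B$ of size $r$ there is a set of at most $c$ points of $\mathbb R^d$ such that every object of $\mathcal C$ of size at least $r$ that intersects $B$ contains at least one of these points. The intersection graph of $\mathcal C$ has vertex set $\mathcal C$, two objects being adjacent iff they intersect. For an integer $t\ge 0$, a graph $H$ is a $t$-shallow minor ($t$-minor) of a graph $G$ if there are pairwise disjoint sets $V_v\subseteq V(G)$, $v\in V(H)$, each inducing a connected subgraph of $G$ of radius at most $t$, such that $uv\in E(H)$ if and only if some edge of $G$ joins $V_u$ and $V_v$. For a graph $H$, $\beta(H)$ is the minimum number of cliques partitioning $V(H)$; for $x\in V(H)$, $H_x$ is the subgraph induced by the closed neighborhood $N_H[x]$; $\tilde\beta(H)=\min_{x\in V(H)}\beta(H_x)$; and $\hat\beta_t(G)=\max\{\tilde\beta(H): H \text{ a nonempty } t\text{-minor of } G\}$. *)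

theory Defs
  imports "HOL-Analysis.Analysis" "HOL-Library.Disjoint_Sets"
begin

definition cube :: "real^'d \<Rightarrow> real \<Rightarrow> (real^'d) set" where
  "cube a r = {x. \<forall>i. a$i \<le> x$i \<and> x$i \<le> a$i + r}"

definition obj_size :: "(real^'d) set \<Rightarrow> real" where
  "obj_size S = Inf {r. r \<ge> 0 \<and> (\<exists>a. S \<subseteq> cube a r)}"

(* the collection {obj v | v \<in> V} (indexed, duplicates allowed) is c-fat *)
definition fat :: "real \<Rightarrow> nat set \<Rightarrow> (nat \<Rightarrow> (real^'d) set) \<Rightarrow> bool" where
  "fat c V obj \<longleftrightarrow> (\<forall>r\<ge>0. \<forall>a. \<exists>P. finite P \<and> real (card P) \<le> c \<and>
      (\<forall>v\<in>V. obj_size (obj v) \<ge> r \<and> obj v \<inter> cube a r \<noteq> {} \<longrightarrow> obj v \<inter> P \<noteq> {}))"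

definition igraph :: "(nat \<Rightarrow> (real^'d) set) \<Rightarrow> nat \<Rightarrow> nat \<Rightarrow> bool" where
  "igraph obj u v \<longleftrightarrow> u \<noteq> v \<and> obj u \<inter> obj v \<noteq> {}"

definition walk_in :: "('a \<Rightarrow> 'a \<Rightarrow> bool) \<Rightarrow> 'a set \<Rightarrow> 'a list \<Rightarrow> bool" where
  "walk_in E X xs \<longleftrightarrow> xs \<noteq> [] \<and> set xs \<subseteq> X \<and> (\<forall>i. Suc i < length xs \<longrightarrow> E (xs!i) (xs!Suc i))"

definition conn_radius_le :: "('a \<Rightarrow> 'a \<Rightarrow> bool) \<Rightarrow> 'a set \<Rightarrow> nat \<Rightarrow> bool" where
  "conn_radius_le E X t \<longleftrightarrow> (\<exists>x\<in>X. \<forall>y\<in>X. \<exists>xs. walk_in E X xs \<and> hd xs = x \<and> last xs = y \<and> length xs \<le> t + 1)"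

(* A t-shallow minor of G = (V,E), represented canonically with the branch sets
   as its vertices: W is a family of pairwise disjoint branch sets *)
definition shallow_minor_model :: "nat \<Rightarrow> 'a set \<Rightarrow> ('a \<Rightarrow> 'a \<Rightarrow> bool) \<Rightarrow> 'a set set \<Rightarrow> bool" where
  "shallow_minor_model t V E W \<longleftrightarrow> (\<forall>X\<in>W. X \<subseteq> V \<and> conn_radius_le E X t) \<and>
      (\<forall>X\<in>W. \<forall>Y\<in>W. X \<noteq> Y \<longrightarrow> X \<inter> Y = {})"

definition minor_edge :: "('a \<Rightarrow> 'a \<Rightarrow> bool) \<Rightarrow> 'a set \<Rightarrow> 'a set \<Rightarrow> bool" where
  "minor_edge E X Y \<longleftrightarrow> X \<noteq> Y \<and> (\<exists>u\<in>X. \<exists>v\<in>Y. E u v)"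

definition is_clique :: "('b \<Rightarrow> 'b \<Rightarrow> bool) \<Rightarrow> 'b set \<Rightarrow> bool" where
  "is_clique F K \<longleftrightarrow> (\<forall>u\<in>K. \<forall>v\<in>K. u \<noteq> v \<longrightarrow> F u v)"

definition clique_cover_number :: "('b \<Rightarrow> 'b \<Rightarrow> bool) \<Rightarrow> 'b set \<Rightarrow> nat" where
  "clique_cover_number F S = (LEAST k. \<exists>P. partition_on S P \<and> finite P \<and> card P = k \<and> (\<forall>K\<in>P. is_clique F K))"

definition closed_nbhd :: "('b \<Rightarrow> 'b \<Rightarrow> bool) \<Rightarrow> 'b set \<Rightarrow> 'b \<Rightarrow> 'b set" where
  "closed_nbhd F S x = insert x {y\<in>S. F x y}"

definition tilde_beta :: "('b \<Rightarrow> 'b \<Rightarrow> bool) \<Rightarrow> 'b set \<Rightarrow> nat" where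
  "tilde_beta F S = Min ((\<lambda>x. clique_cover_number F (closed_nbhd F S x)) ` S)"

(* hat beta_t(G): max of tilde beta over nonempty t-shallow minors (0 if there are none) *)
definition hat_beta :: "nat \<Rightarrow> 'a set \<Rightarrow> ('a \<Rightarrow> 'a \<Rightarrow> bool) \<Rightarrow> nat" where
  "hat_beta t V E = Sup {tilde_beta (minor_edge E) W | W. shallow_minor_model t V E W \<and> W \<noteq> {}}"

end

theory Submission
  imports Defs
begin

text \<open>Among the branch sets of a \<open>t\<close>-shallow minor choose one, \<open>x\<close>, whose largest object is
  smallest, of size \<open>m\<close>. All objects of \<open>x\<close> have size at most \<open>m\<close>, so walking from the centre
  of \<open>x\<close> shows that \<open>x\<close> stays within distance \<open>t m\<close> of a box of side \<open>m\<close>. Every neighbour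
  \<open>Y\<close> of \<open>x\<close> contains an object of size at least \<open>m\<close>; walking inside \<open>Y\<close> from an object touching
  \<open>x\<close> to it, the first such big object is met after at most \<open>2t\<close> small steps, hence it meets a
  box of side \<open>(6t+1) m\<close>. That box is the union of \<open>(6t+1)^d\<close> boxes of side \<open>m\<close>, and by fatness
  \<open>c\<close> points per box pierce all big objects meeting it. Neighbours of \<open>x\<close> hit by the same point
  are adjacent, so the closed neighbourhood of \<open>x\<close> is covered by \<open>1 + (6t+1)^d c\<close> cliques; the
  argument even gives the bound \<open>O(c t^d)\<close>.\<close>

definition enlarged_cube :: "real^'d \<Rightarrow> real \<Rightarrow> real \<Rightarrow> (real^'d) set" where
  "enlarged_cube a s \<delta> = {z. \<forall>i. a$i - \<delta> \<le> z$i \<and> z$i \<le> a$i + s + \<delta>}"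

lemma enlarged_cube_0: "enlarged_cube a s 0 = cube a s"
  by (simp add: cube_def enlarged_cube_def)

lemma enlarged_cube_eq_cube: "enlarged_cube a s \<delta> = cube (\<chi> i. a$i - \<delta>) (s + 2 * \<delta>)"
  unfolding cube_def enlarged_cube_def by (simp add: algebra_simps)

lemma enlarged_cube_mono: "\<delta> \<le> \<delta>' \<Longrightarrow> enlarged_cube a s \<delta> \<subseteq> enlarged_cube a s \<delta>'"
  unfolding enlarged_cube_def by (auto; smt (verit))

lemma cube_mono: "r \<le> m \<Longrightarrow> cube b r \<subseteq> cube b m"
  unfolding cube_def by (auto; smt (verit))

lemma subset_enlarged_cube_if_meets:
  assumes "T \<subseteq> cube b m" "T \<inter> enlarged_cube a s \<delta> \<noteq> {}"
  shows "T \<subseteq> enlarged_cube a s (\<delta> + m)"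
proof
  fix y assume y: "y \<in> T"
  obtain z where z: "z \<in> T" "z \<in> enlarged_cube a s \<delta>" using assms(2) by blast
  show "y \<in> enlarged_cube a s (\<delta> + m)"
    unfolding enlarged_cube_def
  proof (intro CollectI allI)
    fix i
    have "b$i \<le> y$i" "y$i \<le> b$i + m" "b$i \<le> z$i" "z$i \<le> b$i + m"
      using assms(1) y z(1) by (auto simp: cube_def)
    moreover have "a$i - \<delta> \<le> z$i" "z$i \<le> a$i + s + \<delta>"
      using z(2) by (auto simp: enlarged_cube_def)
    ultimately show "a$i - (\<delta> + m) \<le> y$i \<and> y$i \<le> a$i + s + (\<delta> + m)" by linarith
  qed
qed

lemma bounded_obj_size_cube:
  fixes S :: "(real^'d) set"
  assumes "bounded S"
  shows "0 \<le> obj_size S \<and> (\<exists>a. S \<subseteq> cube a (obj_size S))"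
proof (cases "S = {}")
  case True
  have "{r. r \<ge> 0 \<and> (\<exists>a. S \<subseteq> cube a r)} = {0..}" using True by auto
  then have "obj_size S = 0" unfolding obj_size_def by (simp add: cInf_atLeast)
  then show ?thesis using True by auto
next
  case False
  have lo_bdd: "bdd_below ((\<lambda>z. z$i) ` S)" for i
    using bounded_imp_bdd_below[OF bounded_component_cart[OF assms]] .
  have hi_bdd: "bdd_above ((\<lambda>z. z$i) ` S)" for i
    using bounded_imp_bdd_above[OF bounded_component_cart[OF assms]] .
  define lo :: "real^'d" where "lo = (\<chi> i. Inf ((\<lambda>z. z$i) ` S))"
  define hi :: "real^'d" where "hi = (\<chi> i. Sup ((\<lambda>z. z$i) ` S))"
  have lo: "lo$i \<le> z$i" and hi: "z$i \<le> hi$i" if "z \<in> S" for z i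
    using that lo_bdd hi_bdd by (auto simp: lo_def hi_def intro: cInf_lower cSup_upper)
  define r0 where "r0 = Max (range (\<lambda>i. hi$i - lo$i))"
  have r0_ge: "hi$i - lo$i \<le> r0" for i unfolding r0_def by (rule Max_ge) auto
  obtain z0 where z0: "z0 \<in> S" using False by blast
  have r0_nonneg: "r0 \<ge> 0"
    using r0_ge[of undefined] lo[OF z0, of undefined] hi[OF z0, of undefined] by linarith
  have S_cube: "S \<subseteq> cube lo r0"
    unfolding cube_def using lo hi r0_ge by (smt (verit) mem_Collect_eq subsetI)
  have r0_least: "r0 \<le> r" if "S \<subseteq> cube a r" for a r
  proof -
    have "r0 \<in> range (\<lambda>i. hi$i - lo$i)" unfolding r0_def by (rule Max_in) auto
    then obtain i where i: "r0 = hi$i - lo$i" by auto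
    have "a$i \<le> lo$i"
      unfolding lo_def using False that by (auto simp: cube_def intro!: cInf_greatest)
    moreover have "hi$i \<le> a$i + r"
      unfolding hi_def using False that by (auto simp: cube_def intro!: cSup_least)
    ultimately show ?thesis using i by linarith
  qed
  have "obj_size S = r0" unfolding obj_size_def
    by (rule cInf_eq_minimum) (use r0_nonneg S_cube r0_least in auto)
  then show ?thesis using r0_nonneg S_cube by auto
qed

lemma obj_size_nonneg: "bounded S \<Longrightarrow> 0 \<le> obj_size S"
  using bounded_obj_size_cube by blast

lemma subset_cube_if_obj_size_le:
  assumes "bounded S" "obj_size S \<le> m"
  obtains a where "S \<subseteq> cube a m"
  using bounded_obj_size_cube[OF assms(1)] cube_mono[OF assms(2)] by blast

lemma cube_grid_cover:
  fixes b z :: "real^'d"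
  assumes m: "m \<ge> 0" and K: "K \<ge> 1" and z: "z \<in> cube b (real K * m)"
  obtains k where "\<forall>i. k i < K" "z \<in> cube (\<chi> i. b$i + real (k i) * m) m"
proof (cases "m = 0")
  case True
  then show ?thesis using that[of "\<lambda>_. 0"] z K by (auto simp: cube_def)
next
  case False
  with m have m_pos: "m > 0" by simp
  define k where "k i = nat (min (int K - 1) \<lfloor>(z$i - b$i)/m\<rfloor>)" for i
  have "k i < K \<and> b$i + real (k i) * m \<le> z$i \<and> z$i \<le> b$i + real (k i) * m + m" for i
  proof -
    define q where "q = (z$i - b$i)/m"
    have q0: "0 \<le> q" and qK: "q \<le> real K"
      using z m_pos by (auto simp: q_def field_simps cube_def)
    have zq: "z$i = b$i + q * m" using m_pos by (simp add: q_def)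
    show ?thesis
    proof (cases "\<lfloor>q\<rfloor> \<le> int K - 1")
      case True
      then have ki: "real (k i) = of_int \<lfloor>q\<rfloor>" using q0 by (simp add: k_def q_def[symmetric])
      have "of_int \<lfloor>q\<rfloor> * m \<le> q * m" "q * m \<le> (of_int \<lfloor>q\<rfloor> + 1) * m"
        using m_pos by (auto intro: mult_right_mono)
      moreover have "k i < K" using True q0 by (simp add: k_def q_def[symmetric]; linarith)
      ultimately show ?thesis using zq ki by (simp add: algebra_simps)
    next
      case False
      \<comment> \<open>only the upper face \<open>q = K\<close>, which belongs to the last cell\<close>
      then have "q = real K" using qK by linarith
      moreover have "k i = K - 1" using False by (simp add: k_def q_def[symmetric])
      ultimately show ?thesis using zq K m_pos by (simp add: of_nat_diff algebra_simps)
    qed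
  qed
  then show ?thesis using that[of k] by (auto simp: cube_def)
qed

lemma walk_in_iff_successively:
  "walk_in E X xs \<longleftrightarrow> xs \<noteq> [] \<and> set xs \<subseteq> X \<and> successively E xs"
  by (simp add: walk_in_def successively_conv_nth)

lemma igraph_commute: "igraph obj u v \<longleftrightarrow> igraph obj v u"
  by (auto simp: igraph_def)

lemma last_obj_subset_enlarged_cube:
  assumes "successively (igraph obj) xs" "xs \<noteq> []"
    "\<forall>u\<in>set xs. bounded (obj u) \<and> obj_size (obj u) \<le> m"
    "obj (hd xs) \<subseteq> enlarged_cube a s \<delta>"
  shows "obj (last xs) \<subseteq> enlarged_cube a s (\<delta> + real (length xs - 1) * m)"
  using assms
proof (induction xs arbitrary: \<delta>)
  case Nil then show ?case by simp
next
  case (Cons x xs)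
  show ?case
  proof (cases "xs = []")
    case True then show ?thesis using Cons.prems by simp
  next
    case False
    have edge: "igraph obj x (hd xs)" and walk: "successively (igraph obj) xs"
      using Cons.prems(1) False by (auto simp: successively_Cons)
    obtain b where "obj (hd xs) \<subseteq> cube b m"
      using subset_cube_if_obj_size_le Cons.prems(3) False by (meson hd_in_set list.set_intros(2))
    moreover have "obj (hd xs) \<inter> enlarged_cube a s \<delta> \<noteq> {}"
      using edge Cons.prems(4) by (auto simp: igraph_def)
    ultimately have "obj (hd xs) \<subseteq> enlarged_cube a s (\<delta> + m)"
      by (rule subset_enlarged_cube_if_meets)
    then have "obj (last xs) \<subseteq> enlarged_cube a s (\<delta> + m + real (length xs - 1) * m)"
      using Cons.IH[OF walk False] Cons.prems(3) by simp
    moreover have "\<delta> + m + real (length xs - 1) * m = \<delta> + real (length (x#xs) - 1) * m"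
      using False by (cases xs) (auto simp: algebra_simps)
    ultimately show ?thesis using False by (metis last_ConsR)
  qed
qed

text \<open>Up to the first big object every object of the walk is small, so each step enlarges the
  region by at most \<open>m\<close>.\<close>

lemma big_obj_meets_enlarged_cube:
  assumes "successively (igraph obj) xs" "\<forall>u\<in>set xs. bounded (obj u)" "m \<ge> 0"
    "obj (hd xs) \<inter> enlarged_cube a s \<delta> \<noteq> {}" "\<exists>w\<in>set xs. m \<le> obj_size (obj w)"
  shows "\<exists>w\<in>set xs. m \<le> obj_size (obj w) \<and>
           obj w \<inter> enlarged_cube a s (\<delta> + real (length xs - 1) * m) \<noteq> {}"
  using assms
proof (induction xs arbitrary: \<delta>)
  case Nil then show ?case by simp
next
  case (Cons x xs)
  show ?case
  proof (cases "m \<le> obj_size (obj x)")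
    case True
    have "enlarged_cube a s \<delta> \<subseteq> enlarged_cube a s (\<delta> + real (length (x#xs) - 1) * m)"
      using Cons.prems(3) by (intro enlarged_cube_mono) simp
    then show ?thesis using True Cons.prems(4) by auto
  next
    case False
    then have "xs \<noteq> []" using Cons.prems(5) by auto
    have edge: "igraph obj x (hd xs)" and walk: "successively (igraph obj) xs"
      using Cons.prems(1) \<open>xs \<noteq> []\<close> by (auto simp: successively_Cons)
    obtain b where "obj x \<subseteq> cube b m"
      using subset_cube_if_obj_size_le[of "obj x" m] Cons.prems(2) False by auto
    then have "obj x \<subseteq> enlarged_cube a s (\<delta> + m)"
      by (rule subset_enlarged_cube_if_meets) (use Cons.prems(4) in simp)
    then have "obj (hd xs) \<inter> enlarged_cube a s (\<delta> + m) \<noteq> {}"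
      using edge by (auto simp: igraph_def)
    moreover have "\<forall>u\<in>set xs. bounded (obj u)" "\<exists>w\<in>set xs. m \<le> obj_size (obj w)"
      using Cons.prems(2,5) False by auto
    ultimately obtain w where w: "w \<in> set xs" "m \<le> obj_size (obj w)"
      "obj w \<inter> enlarged_cube a s (\<delta> + m + real (length xs - 1) * m) \<noteq> {}"
      using Cons.IH[OF walk _ Cons.prems(3)] by blast
    moreover have "\<delta> + m + real (length xs - 1) * m = \<delta> + real (length (x#xs) - 1) * m"
      using \<open>xs \<noteq> []\<close> by (cases xs) (auto simp: algebra_simps)
    ultimately show ?thesis by (metis list.set_intros(2))
  qed
qed

lemma small_branch_set_in_enlarged_cube:
  assumes "conn_radius_le (igraph obj) X t" "m \<ge> 0"
    "\<forall>u\<in>X. bounded (obj u) \<and> obj_size (obj u) \<le> m"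
  obtains a where "\<forall>u\<in>X. obj u \<subseteq> enlarged_cube a m (real t * m)"
proof -
  obtain x0 where x0: "x0 \<in> X"
    "\<forall>y\<in>X. \<exists>xs. walk_in (igraph obj) X xs \<and> hd xs = x0 \<and> last xs = y \<and> length xs \<le> t + 1"
    using assms(1) unfolding conn_radius_le_def by blast
  obtain a where a: "obj x0 \<subseteq> cube a m"
    using subset_cube_if_obj_size_le assms(3) x0(1) by meson
  have "obj u \<subseteq> enlarged_cube a m (real t * m)" if "u \<in> X" for u
  proof -
    obtain xs where xs: "walk_in (igraph obj) X xs" "hd xs = x0" "last xs = u" "length xs \<le> t + 1"
      using x0(2) \<open>u \<in> X\<close> by blast
    then have "obj u \<subseteq> enlarged_cube a m (0 + real (length xs - 1) * m)"
      using last_obj_subset_enlarged_cube[of obj xs m a m 0] a assms(3)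
      by (auto simp: walk_in_iff_successively enlarged_cube_0)
    also have "\<dots> \<subseteq> enlarged_cube a m (real t * m)"
      using xs(4) assms(2) by (intro enlarged_cube_mono) (simp add: mult_right_mono)
    finally show ?thesis .
  qed
  then show ?thesis using that by blast
qed

text \<open>The walk runs from \<open>v\<close> through the centre of \<open>Y\<close> to a big object, so it has at most
  \<open>2t\<close> steps.\<close>

lemma branch_set_big_obj_meets_enlarged_cube:
  assumes "conn_radius_le (igraph obj) Y t" "\<forall>u\<in>Y. bounded (obj u)" "m \<ge> 0"
    "v \<in> Y" "obj v \<inter> enlarged_cube a s \<delta> \<noteq> {}" "\<exists>w\<in>Y. m \<le> obj_size (obj w)"
  shows "\<exists>w\<in>Y. m \<le> obj_size (obj w) \<and> obj w \<inter> enlarged_cube a s (\<delta> + 2 * real t * m) \<noteq> {}"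
proof -
  let ?E = "igraph obj"
  obtain y0 where y0: "\<forall>y\<in>Y. \<exists>xs. walk_in ?E Y xs \<and> hd xs = y0 \<and> last xs = y \<and> length xs \<le> t + 1"
    using assms(1) unfolding conn_radius_le_def by blast
  obtain w where w: "w \<in> Y" "m \<le> obj_size (obj w)" using assms(6) by blast
  obtain ys1 where ys1: "walk_in ?E Y ys1" "hd ys1 = y0" "last ys1 = v" "length ys1 \<le> t + 1"
    using y0 assms(4) by blast
  obtain ys2 where ys2: "walk_in ?E Y ys2" "hd ys2 = y0" "last ys2 = w" "length ys2 \<le> t + 1"
    using y0 w(1) by blast
  have ys1_ne: "ys1 \<noteq> []" and ys2_eq: "ys2 = y0 # tl ys2"
    using ys1(1) ys2(1,2) by (auto simp: walk_in_iff_successively intro: list.collapse[symmetric])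
  define zs where "zs = rev ys1 @ tl ys2"
  have "successively ?E zs"
  proof -
    have "successively ?E (rev ys1)" "successively ?E (y0 # tl ys2)"
      using ys1(1) ys2(1) ys2_eq by (auto simp: walk_in_iff_successively igraph_commute)
    then show ?thesis
      using ys1(2) ys1_ne by (auto simp: zs_def successively_append_iff successively_Cons last_rev)
  qed
  moreover have zs_Y: "set zs \<subseteq> Y"
    using ys1(1) ys2(1) by (auto simp: walk_in_iff_successively zs_def dest: list.set_sel(2))
  moreover have "hd zs = v" using ys1_ne ys1(3) by (simp add: zs_def hd_rev)
  moreover have "w \<in> set zs"
  proof -
    have "y0 \<in> set zs" using ys1_ne ys1(2) hd_in_set[OF ys1_ne] by (simp add: zs_def)
    moreover have "w \<in> set (y0 # tl ys2)" using ys2(3) ys2_eq by (metis last_in_set list.discI)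
    ultimately show ?thesis by (auto simp: zs_def)
  qed
  ultimately obtain w' where w': "w' \<in> set zs" "m \<le> obj_size (obj w')"
      "obj w' \<inter> enlarged_cube a s (\<delta> + real (length zs - 1) * m) \<noteq> {}"
    using big_obj_meets_enlarged_cube[of obj zs m a s \<delta>] assms(2,3,5) w(2) by blast
  have "real (length zs - 1) \<le> 2 * real t"
    using ys1(4) ys2(4) ys1_ne ys2_eq by (simp add: zs_def)
  then have "enlarged_cube a s (\<delta> + real (length zs - 1) * m) \<subseteq> enlarged_cube a s (\<delta> + 2 * real t * m)"
    using assms(3) by (intro enlarged_cube_mono) (simp add: mult_right_mono)
  then show ?thesis using w' zs_Y by blast
qed

lemma minor_neighbour_big_obj_meets_enlarged_cube:
  assumes "\<forall>u\<in>X. obj u \<subseteq> enlarged_cube a s \<delta>" "minor_edge (igraph obj) X Y"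
    "conn_radius_le (igraph obj) Y t" "\<forall>u\<in>Y. bounded (obj u)" "m \<ge> 0"
    "\<exists>w\<in>Y. m \<le> obj_size (obj w)"
  shows "\<exists>w\<in>Y. m \<le> obj_size (obj w) \<and> obj w \<inter> enlarged_cube a s (\<delta> + 2 * real t * m) \<noteq> {}"
proof -
  obtain u v where "u \<in> X" "v \<in> Y" "obj u \<inter> obj v \<noteq> {}"
    using assms(2) unfolding minor_edge_def igraph_def by blast
  then have "obj v \<inter> enlarged_cube a s \<delta> \<noteq> {}" using assms(1) by blast
  then show ?thesis using assms(6)
    by (rule branch_set_big_obj_meets_enlarged_cube[OF assms(3,4,5) \<open>v \<in> Y\<close>])
qed

lemma clique_cover_number_le_card_codomain:
  assumes "g ` S \<subseteq> Q" "finite Q"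
    and fibres: "\<And>y y'. y \<in> S \<Longrightarrow> y' \<in> S \<Longrightarrow> g y = g y' \<Longrightarrow> y \<noteq> y' \<Longrightarrow> F y y'"
  shows "clique_cover_number F S \<le> card Q"
proof -
  define P where "P = (\<lambda>q. {y\<in>S. g y = q}) ` (g ` S)"
  have fin: "finite (g ` S)" using assms(1,2) finite_subset by blast
  have "partition_on S P" unfolding partition_on_def disjoint_def P_def by auto
  moreover have "finite P" unfolding P_def using fin by simp
  moreover have "\<forall>K\<in>P. is_clique F K" using fibres unfolding P_def is_clique_def by auto
  ultimately have "clique_cover_number F S \<le> card P"
    unfolding clique_cover_number_def by (intro Least_le) blast
  also have "\<dots> \<le> card (g ` S)" unfolding P_def by (rule card_image_le[OF fin])
  also have "\<dots> \<le> card Q" by (rule card_mono[OF assms(2,1)])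
  finally show ?thesis .
qed

text \<open>A point of \<open>Q\<close> hit by two neighbours of \<open>x\<close> lies in objects of both branch sets;
  these objects are distinct because the branch sets are disjoint, so the two neighbours are
  adjacent in the minor.\<close>

lemma clique_cover_closed_nbhd_le_piercing:
  fixes obj :: "nat \<Rightarrow> (real^'d) set"
  assumes "disjoint W" "finite Q"
    and pierced: "\<And>Y. Y \<in> W \<Longrightarrow> minor_edge (igraph obj) x Y \<Longrightarrow> \<exists>u\<in>Y. obj u \<inter> Q \<noteq> {}"
  shows "clique_cover_number (minor_edge (igraph obj))
           (closed_nbhd (minor_edge (igraph obj)) W x) \<le> Suc (card Q)"
proof -
  let ?F = "minor_edge (igraph obj)"
  let ?S = "closed_nbhd ?F W x"
  define p where "p Y = (SOME p. p \<in> Q \<and> (\<exists>u\<in>Y. p \<in> obj u))" for Y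
  have p: "p Y \<in> Q \<and> (\<exists>u\<in>Y. p Y \<in> obj u)" if "Y \<in> ?S" "Y \<noteq> x" for Y
  proof -
    have "\<exists>p. p \<in> Q \<and> (\<exists>u\<in>Y. p \<in> obj u)"
      using that pierced unfolding closed_nbhd_def by blast
    then show ?thesis unfolding p_def by (rule someI_ex)
  qed
  define g where "g Y = (if Y = x then None else Some (p Y))" for Y
  have "clique_cover_number ?F ?S \<le> card (insert None (Some ` Q))"
  proof (rule clique_cover_number_le_card_codomain)
    show "g ` ?S \<subseteq> insert None (Some ` Q)" using p unfolding g_def by auto
    show "finite (insert None (Some ` Q))" using assms(2) by simp
  next
    fix y y' assume yS: "y \<in> ?S" and y'S: "y' \<in> ?S" and "g y = g y'" and "y \<noteq> y'"
    then have "y \<noteq> x" "y' \<noteq> x" "p y = p y'" unfolding g_def by (auto split: if_splits)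
    then obtain u u' where u: "u \<in> y" "u' \<in> y'" "p y \<in> obj u" "p y \<in> obj u'"
      using p[OF yS] p[OF y'S] by metis
    have "y \<inter> y' = {}"
      using yS y'S \<open>y \<noteq> x\<close> \<open>y' \<noteq> x\<close> \<open>y \<noteq> y'\<close> assms(1)
      unfolding closed_nbhd_def disjoint_def by auto
    then have "igraph obj u u'" using u by (auto simp: igraph_def)
    then show "?F y y'" using u \<open>y \<noteq> y'\<close> unfolding minor_edge_def by blast
  qed
  also have "\<dots> \<le> Suc (card Q)" using assms(2) by (simp add: card_insert_if card_image)
  finally show ?thesis .
qed

lemma fat_pierces_grid_cube:
  fixes obj :: "nat \<Rightarrow> (real^'d) set"
  assumes fat: "fat c V obj" and "m \<ge> 0" "K \<ge> 1"
  obtains Q where "finite Q" "card Q \<le> K ^ CARD('d) * nat \<lfloor>c\<rfloor>"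
    "\<And>v. v \<in> V \<Longrightarrow> m \<le> obj_size (obj v) \<Longrightarrow> obj v \<inter> cube b (real K * m) \<noteq> {} \<Longrightarrow> obj v \<inter> Q \<noteq> {}"
proof -
  define corner :: "('d \<Rightarrow> nat) \<Rightarrow> real^'d" where "corner k = (\<chi> i. b$i + real (k i) * m)" for k
  define grid where "grid = {k::'d \<Rightarrow> nat. \<forall>i. k i < K}"
  have "\<forall>k. \<exists>P. finite P \<and> real (card P) \<le> c \<and>
      (\<forall>v\<in>V. m \<le> obj_size (obj v) \<and> obj v \<inter> cube (corner k) m \<noteq> {} \<longrightarrow> obj v \<inter> P \<noteq> {})"
    using fat \<open>m \<ge> 0\<close> unfolding fat_def by blast
  then obtain P where P: "\<forall>k. finite (P k) \<and> real (card (P k)) \<le> c \<and>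
      (\<forall>v\<in>V. m \<le> obj_size (obj v) \<and> obj v \<inter> cube (corner k) m \<noteq> {} \<longrightarrow> obj v \<inter> P k \<noteq> {})"
    by (metis choice)
  have grid_eq: "grid = (\<Pi>\<^sub>E i\<in>UNIV. {..<K})" unfolding grid_def by (auto simp: PiE_UNIV_domain)
  have "finite grid" unfolding grid_eq by (simp add: finite_PiE)
  show ?thesis
  proof
    show "finite (\<Union>k\<in>grid. P k)" using \<open>finite grid\<close> P by blast
    have "card (\<Union>k\<in>grid. P k) \<le> (\<Sum>k\<in>grid. card (P k))" by (rule card_UN_le[OF \<open>finite grid\<close>])
    also have "\<dots> \<le> card grid * nat \<lfloor>c\<rfloor>"
    proof -
      have "card (P k) \<le> nat \<lfloor>c\<rfloor>" for k using P le_nat_floor by blast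
      then show ?thesis using sum_bounded_above[of grid "\<lambda>k. card (P k)" "nat \<lfloor>c\<rfloor>"] by simp
    qed
    also have "card grid = K ^ CARD('d)" unfolding grid_eq by (simp add: card_PiE)
    finally show "card (\<Union>k\<in>grid. P k) \<le> K ^ CARD('d) * nat \<lfloor>c\<rfloor>" .
  next
    fix v assume v: "v \<in> V" "m \<le> obj_size (obj v)" "obj v \<inter> cube b (real K * m) \<noteq> {}"
    then obtain z where z: "z \<in> obj v" "z \<in> cube b (real K * m)" by blast
    then obtain k where "k \<in> grid" "z \<in> cube (corner k) m"
      using cube_grid_cover[OF \<open>m \<ge> 0\<close> \<open>K \<ge> 1\<close>] unfolding grid_def corner_def by blast
    then show "obj v \<inter> (\<Union>k\<in>grid. P k) \<noteq> {}" using P v z(1) by blast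
  qed
qed

lemma fat_pierces_enlarged_cube:
  fixes obj :: "nat \<Rightarrow> (real^'d) set"
  assumes "fat c V obj" "m \<ge> 0"
  obtains Q where "finite Q" "card Q \<le> (2*n+1) ^ CARD('d) * nat \<lfloor>c\<rfloor>"
    "\<And>v. v \<in> V \<Longrightarrow> m \<le> obj_size (obj v) \<Longrightarrow>
      obj v \<inter> enlarged_cube a m (real n * m) \<noteq> {} \<Longrightarrow> obj v \<inter> Q \<noteq> {}"
proof -
  have region: "cube (\<chi> i. a$i - real n * m) (real (2*n+1) * m) = enlarged_cube a m (real n * m)"
    by (simp add: enlarged_cube_eq_cube algebra_simps)
  obtain Q where "finite Q" "card Q \<le> (2*n+1) ^ CARD('d) * nat \<lfloor>c\<rfloor>"
    "\<And>v. v \<in> V \<Longrightarrow> m \<le> obj_size (obj v) \<Longrightarrow>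
      obj v \<inter> cube (\<chi> i. a$i - real n * m) (real (2*n+1) * m) \<noteq> {} \<Longrightarrow> obj v \<inter> Q \<noteq> {}"
    using fat_pierces_grid_cube[OF assms le_add2[of 1 "2*n"]] by blast
  then show ?thesis unfolding region by (rule that)
qed

lemma finite_family_min_of_max:
  fixes f :: "'a \<Rightarrow> real"
  assumes "finite W" "W \<noteq> {}" "\<And>X. X \<in> W \<Longrightarrow> finite X \<and> X \<noteq> {}"
  obtains x m where "x \<in> W" "\<forall>u\<in>x. f u \<le> m" "\<forall>Y\<in>W. \<exists>w\<in>Y. m \<le> f w"
proof -
  define M where "M X = Max (f ` X)" for X
  have "Min (M ` W) \<in> M ` W" using assms(1,2) by (intro Min_in) auto
  then obtain x where "x \<in> W" "M x = Min (M ` W)" by auto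
  then have x: "x \<in> W" "\<forall>Y\<in>W. M x \<le> M Y" using assms(1) by auto
  have "\<forall>u\<in>x. f u \<le> M x" using assms(3)[OF x(1)] unfolding M_def by simp
  moreover have "\<exists>w\<in>Y. M x \<le> f w" if "Y \<in> W" for Y
  proof -
    have "M Y \<in> f ` Y" using assms(3)[OF that] unfolding M_def by (intro Max_in) auto
    then show ?thesis using x(2) that by force
  qed
  ultimately show ?thesis using that x(1) by blast
qed

lemma tilde_beta_shallow_minor_le:
  fixes obj :: "nat \<Rightarrow> (real^'d) set"
  assumes "finite V" "\<forall>v\<in>V. bounded (obj v)" "fat c V obj"
    and W: "shallow_minor_model t V (igraph obj) W" "W \<noteq> {}"
  shows "tilde_beta (minor_edge (igraph obj)) W \<le> Suc ((6*t+1) ^ CARD('d) * nat \<lfloor>c\<rfloor>)"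
proof -
  let ?F = "minor_edge (igraph obj)"
  have branch: "X \<subseteq> V" "conn_radius_le (igraph obj) X t" if "X \<in> W" for X
    using W(1) that by (auto simp: shallow_minor_model_def)
  have "disjoint W" using W(1) by (auto simp: shallow_minor_model_def disjoint_def)
  have "finite W" using branch(1) \<open>finite V\<close> by (meson Pow_iff finite_Pow_iff finite_subset subsetI)
  have branch_fin: "finite X \<and> X \<noteq> {}" if "X \<in> W" for X
    using branch[OF that] \<open>finite V\<close> finite_subset unfolding conn_radius_le_def by blast
  obtain x m where x: "x \<in> W" "\<forall>u\<in>x. obj_size (obj u) \<le> m"
      and big: "\<forall>Y\<in>W. \<exists>w\<in>Y. m \<le> obj_size (obj w)"
    by (rule finite_family_min_of_max[OF \<open>finite W\<close> W(2) branch_fin])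
  have bounded: "\<forall>u\<in>X. bounded (obj u)" if "X \<in> W" for X
    using assms(2) branch(1)[OF that] by blast
  obtain u where "u \<in> x" using branch_fin[OF x(1)] by blast
  then have "m \<ge> 0"
    using x(2) obj_size_nonneg bounded[OF x(1)] by (meson order_trans)
  obtain a where a: "\<forall>u\<in>x. obj u \<subseteq> enlarged_cube a m (real t * m)"
    using small_branch_set_in_enlarged_cube[OF branch(2)[OF x(1)] \<open>m \<ge> 0\<close>] x(2) bounded[OF x(1)]
    by blast
  obtain Q where Q: "finite Q" "card Q \<le> (2*(3*t)+1) ^ CARD('d) * nat \<lfloor>c\<rfloor>"
    and pierce: "\<And>v. v \<in> V \<Longrightarrow> m \<le> obj_size (obj v) \<Longrightarrow>
        obj v \<inter> enlarged_cube a m (real (3*t) * m) \<noteq> {} \<Longrightarrow> obj v \<inter> Q \<noteq> {}"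
    using fat_pierces_enlarged_cube[OF assms(3) \<open>m \<ge> 0\<close>, of "3*t" a] by blast
  have "\<exists>w\<in>Y. obj w \<inter> Q \<noteq> {}" if "Y \<in> W" "?F x Y" for Y
  proof -
    have "\<exists>w\<in>Y. m \<le> obj_size (obj w)" using big \<open>Y \<in> W\<close> by blast
    then obtain w where w: "w \<in> Y" "m \<le> obj_size (obj w)"
        "obj w \<inter> enlarged_cube a m (real t * m + 2 * real t * m) \<noteq> {}"
      using minor_neighbour_big_obj_meets_enlarged_cube[OF a \<open>?F x Y\<close> branch(2)[OF \<open>Y \<in> W\<close>]
          bounded[OF \<open>Y \<in> W\<close>] \<open>m \<ge> 0\<close>] by blast
    moreover have "real t * m + 2 * real t * m = real (3*t) * m" by simp
    ultimately have "obj w \<inter> Q \<noteq> {}"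
      using pierce[of w] branch(1)[OF \<open>Y \<in> W\<close>] by (metis subsetD)
    then show ?thesis using w(1) by blast
  qed
  then have "clique_cover_number ?F (closed_nbhd ?F W x) \<le> Suc (card Q)"
    using clique_cover_closed_nbhd_le_piercing[OF \<open>disjoint W\<close> Q(1)] by blast
  moreover have "tilde_beta ?F W \<le> clique_cover_number ?F (closed_nbhd ?F W x)"
    unfolding tilde_beta_def using \<open>finite W\<close> x(1) by (intro Min_le) auto
  ultimately show ?thesis using Q(2) by simp
qed

lemma hat_beta_le:
  assumes "\<And>W. shallow_minor_model t V E W \<Longrightarrow> W \<noteq> {} \<Longrightarrow> tilde_beta (minor_edge E) W \<le> B"
  shows "hat_beta t V E \<le> B"
proof (cases "{tilde_beta (minor_edge E) W | W. shallow_minor_model t V E W \<and> W \<noteq> {}} = {}")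
  case True
  then show ?thesis unfolding hat_beta_def True by simp
next
  case False
  then show ?thesis unfolding hat_beta_def using assms by (intro cSup_least) blast+
qed

lemma grid_piercing_bound_le:
  assumes "c \<ge> 1"
  shows "real (Suc ((6*t+1) ^ d * nat \<lfloor>c\<rfloor>)) \<le> (7 ^ d + 1) * c * (real t + 1) ^ d"
proof -
  have "real (6*t+1) ^ d \<le> (7 * (real t + 1)) ^ d" by (rule power_mono) auto
  also have "\<dots> = 7 ^ d * (real t + 1) ^ d" by (rule power_mult_distrib)
  finally have "real (6*t+1) ^ d * real (nat \<lfloor>c\<rfloor>) \<le> 7 ^ d * (real t + 1) ^ d * c"
    using assms by (intro mult_mono) auto
  moreover have "1 * 1 \<le> c * (real t + 1) ^ d"
    using assms by (intro mult_mono) auto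
  ultimately show ?thesis by (simp add: algebra_simps)
qed

theorem theorem3p1:
  "\<exists>Cd::real. \<forall>(V::nat set) (obj::nat \<Rightarrow> (real^'d) set) (c::real) (t::nat).
     finite V \<longrightarrow> c \<ge> 1 \<longrightarrow> (\<forall>v\<in>V. bounded (obj v)) \<longrightarrow> fat c V obj \<longrightarrow>
     real (hat_beta t V (igraph obj)) \<le> Cd * c * (real t + 1) ^ (2 * CARD('d))"
proof (intro exI allI impI)
  fix V :: "nat set" and obj :: "nat \<Rightarrow> (real^'d) set" and c :: real and t :: nat
  assume "finite V" "c \<ge> 1" "\<forall>v\<in>V. bounded (obj v)" "fat c V obj"
  then have "hat_beta t V (igraph obj) \<le> Suc ((6*t+1) ^ CARD('d) * nat \<lfloor>c\<rfloor>)"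
    by (intro hat_beta_le tilde_beta_shallow_minor_le)
  then have "real (hat_beta t V (igraph obj)) \<le> (7 ^ CARD('d) + 1) * c * (real t + 1) ^ CARD('d)"
    using grid_piercing_bound_le[OF \<open>c \<ge> 1\<close>] of_nat_mono order_trans by blast
  also have "\<dots> \<le> (7 ^ CARD('d) + 1) * c * (real t + 1) ^ (2 * CARD('d))"
    using \<open>c \<ge> 1\<close> by (intro mult_left_mono power_increasing) auto
  finally show "real (hat_beta t V (igraph obj)) \<le> (7 ^ CARD('d) + 1) * c * (real t + 1) ^ (2 * CARD('d))" .
qed

end
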